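(* Let $X,Y\subseteq\mathbb{R}^n$ and let $P$ be a coordinate subspace of $\mathbb{R}^n$. Then $\pi_P(X\cup Y)=\pi_PX\cup\pi_PY$. If moreover $X$ and $Y$ are closed and $X\cup Y$ is $\ell_1$-convex, then also $\pi_P(X\cap Y)=\pi_PX\cap\pi_PY$.
   Context: A coordinate subspace is a linear subspace spanned by a subset of the standard basis; $\pi_P$ is orthogonal projection onto $P$. A subset $Z\subseteq\mathbb{R}^n$ is $\ell_1$-convex if for all $z,z'\in Z$, with $D=\sum_i|z_i-z'_i|$, there is $\gamma\colon[0,D]\to Z$ with $\gamma(0)=z,\gamma(D)=z'$ and $\sum_i|\gamma_i(t)-\gamma_i(t')|=|t-t'|$ for all $t,t'$. *)

theory Defs
  imports "HOL-Analysis.Analysis"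
begin

definition coordinate_subspace :: "(real ^ 'n) set \<Rightarrow> bool" where
  "coordinate_subspace P \<longleftrightarrow> (\<exists>S :: 'n set. P = span ((\<lambda>i. axis i 1) ` S))"

definition orth_proj :: "(real ^ 'n) set \<Rightarrow> real ^ 'n \<Rightarrow> real ^ 'n" where
  "orth_proj P x = (THE p. p \<in> P \<and> (\<forall>y\<in>P. (x - p) \<bullet> y = 0))"

definition l1_dist :: "real ^ 'n \<Rightarrow> real ^ 'n \<Rightarrow> real" where
  "l1_dist z z' = (\<Sum>i\<in>UNIV. \<bar>z $ i - z' $ i\<bar>)"

definition l1_convex :: "(real ^ 'n) set \<Rightarrow> bool" where
  "l1_convex Z \<longleftrightarrow> (\<forall>z\<in>Z. \<forall>z'\<in>Z. \<exists>\<gamma> :: real \<Rightarrow> real ^ 'n.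
      \<gamma> ` {0 .. l1_dist z z'} \<subseteq> Z \<and> \<gamma> 0 = z \<and> \<gamma> (l1_dist z z') = z' \<and>
      (\<forall>t\<in>{0 .. l1_dist z z'}. \<forall>t'\<in>{0 .. l1_dist z z'}. l1_dist (\<gamma> t) (\<gamma> t') = \<bar>t - t'\<bar>))"

end

theory Submission
  imports Defs
begin

text \<open>Projection onto a coordinate subspace just zeroes the coordinates outside it, so the
union statement is the image of a union. For the intersection, take \<open>x \<in> X\<close> and
\<open>y \<in> Y\<close> with the same projection and an \<open>\<ell>\<^sub>1\<close>-geodesic from \<open>x\<close> to \<open>y\<close> inside
\<open>X \<union> Y\<close>. It is continuous and its domain is connected, so it meets the closed set
\<open>X \<inter> Y\<close> in some \<open>z\<close>. Since \<open>z\<close> lies metrically between \<open>x\<close> and \<open>y\<close> for the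
\<open>\<ell>\<^sub>1\<close> distance, coordinatewise the triangle inequalities are equalities, so \<open>z\<close> agrees
with \<open>x\<close> and \<open>y\<close> wherever they agree, in particular on the coordinates of the subspace.\<close>

lemma span_axis_eq:
  "span ((\<lambda>i. axis i 1) ` S) = {v :: real ^ 'n. \<forall>i. i \<notin> S \<longrightarrow> v $ i = 0}"
proof -
  have "(\<lambda>i. axis i (1::real)) ` S \<subseteq> Basis"
    by (auto simp: Basis_vec_def)
  then have "span ((\<lambda>i. axis i 1) ` S) =
      {x. \<forall>b\<in>Basis. b \<notin> (\<lambda>i. axis i (1::real)) ` S \<longrightarrow> x \<bullet> b = 0}"
    by (rule span_substd_basis)
  also have "\<dots> = {v :: real ^ 'n. \<forall>i. i \<notin> S \<longrightarrow> v $ i = 0}"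
    by (auto simp: Basis_vec_def inner_axis axis_eq_axis)
  finally show ?thesis .
qed

lemma orth_proj_span_axis:
  fixes x :: "real ^ 'n"
  shows "orth_proj (span ((\<lambda>i. axis i 1) ` S)) x = (\<chi> i. if i \<in> S then x $ i else 0)"
  unfolding orth_proj_def
proof (rule the1_equality)
  let ?P = "span ((\<lambda>i. axis i (1::real)) ` S)"
  let ?p = "(\<chi> i. if i \<in> S then x $ i else 0) :: real ^ 'n"
  show p: "?p \<in> ?P \<and> (\<forall>y\<in>?P. (x - ?p) \<bullet> y = 0)"
    unfolding span_axis_eq inner_vec_def by (auto intro!: sum.neutral)
  show "\<exists>!p. p \<in> ?P \<and> (\<forall>y\<in>?P. (x - p) \<bullet> y = 0)"
  proof (rule ex1I[of _ ?p])
    show "?p \<in> ?P \<and> (\<forall>y\<in>?P. (x - ?p) \<bullet> y = 0)" by (fact p)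
    fix q assume q: "q \<in> ?P \<and> (\<forall>y\<in>?P. (x - q) \<bullet> y = 0)"
    then have "?p - q \<in> ?P" using p by (simp add: span_diff)
    then have "(x - q) \<bullet> (?p - q) = 0" and "(x - ?p) \<bullet> (?p - q) = 0"
      using p q by blast+
    then have "(?p - q) \<bullet> (?p - q) = 0" by (simp add: inner_diff_left)
    then show "q = ?p" by simp
  qed
qed

lemma l1_dist_nonneg: "0 \<le> l1_dist x y"
  unfolding l1_dist_def by (simp add: sum_nonneg)

lemma dist_le_l1_dist: "dist x y \<le> l1_dist x y"
  unfolding l1_dist_def dist_norm using norm_le_l1_cart[of "x - y"] by simp

lemma l1_dist_between_coordinate:
  assumes "l1_dist x z + l1_dist z y = l1_dist x y" and "x $ i = y $ i"
  shows "z $ i = x $ i"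
proof -
  let ?excess = "\<lambda>j. \<bar>x $ j - z $ j\<bar> + \<bar>z $ j - y $ j\<bar> - \<bar>x $ j - y $ j\<bar>"
  have "(\<Sum>j\<in>UNIV. ?excess j) = 0"
    using assms(1) unfolding l1_dist_def by (simp add: sum.distrib sum_subtractf)
  moreover have "\<And>j. 0 \<le> ?excess j" by simp
  ultimately have "?excess i = 0" by (simp add: sum_nonneg_eq_0_iff)
  then show ?thesis using assms(2) by simp
qed

lemma l1_isometry_continuous_on:
  assumes "\<And>t t'. t \<in> I \<Longrightarrow> t' \<in> I \<Longrightarrow> l1_dist (g t) (g t') = \<bar>t - t'\<bar>"
  shows "continuous_on I g"
proof (rule lipschitz_on_continuous_on)
  show "1-lipschitz_on I g"
  proof (rule lipschitz_onI)
    fix t t' assume "t \<in> I" "t' \<in> I"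
    then show "dist (g t) (g t') \<le> 1 * dist t t'"
      using assms dist_le_l1_dist[of "g t" "g t'"] by (simp add: dist_real_def)
  qed simp
qed

lemma connected_image_meets_closed_inter:
  assumes "connected S" "continuous_on S g" "g ` S \<subseteq> X \<union> Y" "closed X" "closed Y"
    and "a \<in> S" "g a \<in> X" "b \<in> S" "g b \<in> Y"
  obtains t where "t \<in> S" "g t \<in> X \<inter> Y"
proof -
  have "connected (g ` S)" using assms(2,1) by (rule connected_continuous_image)
  then have "X \<inter> Y \<inter> g ` S \<noteq> {}"
    using assms(3-) unfolding connected_closed by blast
  then show ?thesis using that by blast
qed

lemma l1_convex_closed_Un_between:
  assumes "l1_convex (X \<union> Y)" "closed X" "closed Y" "x \<in> X" "y \<in> Y"
  obtains z where "z \<in> X \<inter> Y" "l1_dist x z + l1_dist z y = l1_dist x y"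
proof -
  define D where "D = l1_dist x y"
  have "0 \<le> D" unfolding D_def by (rule l1_dist_nonneg)
  obtain g where g: "g ` {0..D} \<subseteq> X \<union> Y" "g 0 = x" "g D = y"
    and iso: "\<And>t t'. t \<in> {0..D} \<Longrightarrow> t' \<in> {0..D} \<Longrightarrow> l1_dist (g t) (g t') = \<bar>t - t'\<bar>"
    using assms(1)[unfolded l1_convex_def, rule_format, of x y] assms(4,5)
    unfolding D_def by auto
  obtain t where t: "t \<in> {0..D}" "g t \<in> X \<inter> Y"
  proof (rule connected_image_meets_closed_inter)
    show "continuous_on {0..D} g" using iso by (rule l1_isometry_continuous_on)
    show "0 \<in> {0..D}" "D \<in> {0..D}" using \<open>0 \<le> D\<close> by auto
  qed (use g assms(2-5) in auto)
  have "l1_dist x (g t) + l1_dist (g t) y = D"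
    using iso[of 0 t] iso[of t D] t(1) \<open>0 \<le> D\<close> g(2,3) by simp
  then show ?thesis using that t(2) unfolding D_def by blast
qed

theorem corollary2p5:
  fixes X Y P :: "(real ^ 'n) set"
  assumes "coordinate_subspace P"
  shows "orth_proj P ` (X \<union> Y) = orth_proj P ` X \<union> orth_proj P ` Y \<and>
         (closed X \<and> closed Y \<and> l1_convex (X \<union> Y) \<longrightarrow>
          orth_proj P ` (X \<inter> Y) = orth_proj P ` X \<inter> orth_proj P ` Y)"
proof (intro conjI impI)
  show "orth_proj P ` (X \<union> Y) = orth_proj P ` X \<union> orth_proj P ` Y" by (rule image_Un)
  assume XY: "closed X \<and> closed Y \<and> l1_convex (X \<union> Y)"
  obtain S where P: "P = span ((\<lambda>i. axis i 1) ` S)"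
    using assms unfolding coordinate_subspace_def by blast
  have "p \<in> orth_proj P ` (X \<inter> Y)" if p: "p \<in> orth_proj P ` X \<inter> orth_proj P ` Y" for p
  proof -
    obtain x y where xy: "x \<in> X" "y \<in> Y" "p = orth_proj P x" "p = orth_proj P y"
      using p by blast
    obtain z where z: "z \<in> X \<inter> Y" "l1_dist x z + l1_dist z y = l1_dist x y"
      using l1_convex_closed_Un_between XY xy(1,2) by blast
    have "x $ i = y $ i" if "i \<in> S" for i
      using xy(3,4) that by (simp add: P orth_proj_span_axis vec_eq_iff) metis
    then have "z $ i = x $ i" if "i \<in> S" for i
      using l1_dist_between_coordinate[OF z(2)] that by blast
    then have "orth_proj P z = p"
      using xy(3) by (simp add: P orth_proj_span_axis vec_eq_iff)
    then show ?thesis using z(1) by blast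
  qed
  then show "orth_proj P ` (X \<inter> Y) = orth_proj P ` X \<inter> orth_proj P ` Y" by blast
qed

end
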